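(* Let $v:\mathbb X\times\mathbb X\to[0,\infty]$ be a measurable symmetric pair potential, $z:\mathbb X\to[0,\infty)$ measurable with $\int_Bz\,d\lambda<\infty$ for all $B\in\mathcal X_{\mathsf b}$, and $\mathsf P\in\mathscr G(z)$. Let $h:\mathbb X\to[0,\infty)$ be measurable with $\int_{\mathbb X}h\,d\lambda_z<\infty$, and let $\mathsf P_h$ be the probability measure absolutely continuous with respect to $\mathsf P$ with $$\frac{d\mathsf P_h}{d\mathsf P}(\eta)=\frac{\exp(-\int_{\mathbb X}h\,d\eta)}{\int_{\mathcal N}\exp(-\int_{\mathbb X}h\,d\gamma)\,d\mathsf P(\gamma)}.$$ Then $\mathsf P_h\in\mathscr G(ze^{-h})$.
   Context: $(\mathbb X,\mathrm{dist})$ complete separable metric space with Borel $\sigma$-algebra $\mathcal X$, $\mathcal X_{\mathsf b}$ bounded Borel sets, $\lambda$ a measure finite on bounded sets, $\lambda_z(dx)=z(x)\lambda(dx)$. $\mathcal N$ is the set of locally finite counting measures on $\mathbb X$ with the $\sigma$-algebra $\mathfrak N$ generated by $\eta\mapsto\eta(B)$, $B\in\mathcal X_{\mathsf b}$. $W(x;\eta)=\int v(x,y)\,d\eta(y)$. For an activity $\zeta:\mathbb X\to[0,\infty)$, $\mathscr G(\zeta)$ is the set of probability measures $\mathsf Q$ on $(\mathcal N,\mathfrak N)$ with $\mathsf E_{\mathsf Q}[\int F(x,\eta)\,d\eta(x)]=\int\mathsf E_{\mathsf Q}[F(x,\eta+\delta_x)e^{-W(x;\eta)}]\zeta(x)\,d\lambda(x)$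 for all measurable $F:\mathbb X\times\mathcal N\to[0,\infty)$. *)

theory Defs
  imports "HOL-Probability.Probability"
begin

definition count_meas :: "'a::polish_space measure set" where
  "count_meas = {\<eta>. sets \<eta> = sets borel \<and>
      (\<forall>B\<in>sets borel. bounded B \<longrightarrow> (\<exists>n::nat. emeasure \<eta> B = of_nat n))}"

definition Nspace :: "'a::polish_space measure measure" where
  "Nspace = sigma count_meas
     {{\<eta>\<in>count_meas. emeasure \<eta> B \<in> A} | B A.
        B \<in> sets borel \<and> bounded B \<and> A \<in> sets (borel :: ennreal measure)}"

definition add_point :: "'a::polish_space measure \<Rightarrow> 'a \<Rightarrow> 'a measure" where
  "add_point \<eta> x = measure_of UNIV (sets borel) (\<lambda>A. emeasure \<eta> A + indicator A x)"

definition exp_neg :: "ennreal \<Rightarrow> ennreal" where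
  "exp_neg t = (if t = \<infinity> then 0 else ennreal (exp (- enn2real t)))"

definition Wpot :: "('a \<Rightarrow> 'a \<Rightarrow> ennreal) \<Rightarrow> 'a \<Rightarrow> 'a measure \<Rightarrow> ennreal" where
  "Wpot v x \<eta> = (\<integral>\<^sup>+ y. v x y \<partial>\<eta>)"

text \<open>The set of Gibbs measures G(zeta) (via the GNZ equation).\<close>
definition Gibbs :: "('a::polish_space \<Rightarrow> 'a \<Rightarrow> ennreal) \<Rightarrow> 'a measure \<Rightarrow> ('a \<Rightarrow> real)
     \<Rightarrow> 'a measure measure \<Rightarrow> bool" where
  "Gibbs v lam \<zeta> Q \<longleftrightarrow> prob_space Q \<and> sets Q = sets Nspace \<and>
     (\<forall>F :: 'a \<Rightarrow> 'a measure \<Rightarrow> ennreal.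
        (\<lambda>(x, \<eta>). F x \<eta>) \<in> borel_measurable (borel \<Otimes>\<^sub>M Nspace) \<longrightarrow>
        (\<integral>\<^sup>+ \<eta>. (\<integral>\<^sup>+ x. F x \<eta> \<partial>\<eta>) \<partial>Q) =
        (\<integral>\<^sup>+ x. (\<integral>\<^sup>+ \<eta>. F x (add_point \<eta> x) * exp_neg (Wpot v x \<eta>) \<partial>Q) * ennreal (\<zeta> x) \<partial>lam))"

end

(* Adding a point x to a configuration eta multiplies exp(-int h d eta) by exp(-h x). Hence the
   density of P_h can be moved through the GNZ equation of P, where it turns the activity z into
   z exp(-h). The normalising constant is positive because, by the GNZ equation with F(x, eta) = h x,
   E_P [int h d eta] <= int h z d lambda < infinity, so int h d eta is P-almost surely finite. *)

theory Submission
  imports Defs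
begin

text \<open>Unlike nn_integral_density, g need not be measurable: the GNZ integrand
  eta |-> integral of F x eta d eta is not known to be measurable in eta.\<close>

lemma nn_integral_density_nonmeasurable:
  fixes d :: "'a \<Rightarrow> ennreal"
  assumes d: "d \<in> borel_measurable M" "\<And>x. d x < \<infinity>"
  shows "(\<integral>\<^sup>+ x. g x \<partial>density M d) = (\<integral>\<^sup>+ x. d x * g x \<partial>M)"
proof (rule antisym)
  show "(\<integral>\<^sup>+ x. g x \<partial>density M d) \<le> (\<integral>\<^sup>+ x. d x * g x \<partial>M)"
    unfolding nn_integral_def[of "density M d"]
  proof (rule SUP_least, clarify)
    fix s assume s: "simple_function (density M d) s" "s \<le> g"
    then have "integral\<^sup>S (density M d) s = (\<integral>\<^sup>+ x. d x * s x \<partial>M)"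
      using d(1) borel_measurable_simple_function[OF s(1)]
      by (simp add: nn_integral_eq_simple_integral[symmetric] nn_integral_density)
    also have "\<dots> \<le> (\<integral>\<^sup>+ x. d x * g x \<partial>M)"
      using s(2) by (intro nn_integral_mono mult_left_mono) (auto simp: le_fun_def)
    finally show "integral\<^sup>S (density M d) s \<le> (\<integral>\<^sup>+ x. d x * g x \<partial>M)" .
  qed
  show "(\<integral>\<^sup>+ x. d x * g x \<partial>M) \<le> (\<integral>\<^sup>+ x. g x \<partial>density M d)"
    unfolding nn_integral_def[of M]
  proof (rule SUP_least, clarify)
    fix t assume t: "simple_function M t" "t \<le> (\<lambda>x. d x * g x)"
    define s where "s x = (if d x = 0 then 0 else t x / d x)" for x
    have s_meas: "s \<in> borel_measurable M"
      unfolding s_def using borel_measurable_simple_function[OF t(1)] d(1) by measurable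
    have t_eq: "t x = d x * s x" for x
    proof (cases "d x = 0")
      case True
      then show ?thesis using le_funD[OF t(2), of x] by (simp add: s_def)
    next
      case False
      then show ?thesis
        using d(2)[of x] by (simp add: s_def ennreal_times_divide mult.commute[of "d x"] mult_divide_eq_ennreal)
    qed
    have "s x \<le> g x" for x
      using le_funD[OF t(2), of x] by (auto simp: s_def zero_less_iff_neq_zero intro: divide_le_posI_ennreal)
    then have "(\<integral>\<^sup>+ x. s x \<partial>density M d) \<le> (\<integral>\<^sup>+ x. g x \<partial>density M d)"
      by (intro nn_integral_mono)
    moreover have "integral\<^sup>S M t = (\<integral>\<^sup>+ x. s x \<partial>density M d)"
      using t(1) d(1) s_meas
      by (simp add: nn_integral_eq_simple_integral[symmetric] nn_integral_density t_eq[abs_def])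
    ultimately show "integral\<^sup>S M t \<le> (\<integral>\<^sup>+ x. g x \<partial>density M d)" by simp
  qed
qed

section \<open>Locally finite counting measures\<close>

lemma space_Nspace: "space Nspace = count_meas"
  unfolding Nspace_def by (rule space_measure_of) (auto simp del: Collect_mem_eq)

lemma sets_Nspace:
  "sets Nspace = sigma_sets count_meas {{\<eta>\<in>count_meas. emeasure \<eta> B \<in> A} | B A.
     B \<in> sets borel \<and> bounded B \<and> A \<in> sets (borel :: ennreal measure)}"
  unfolding Nspace_def by (rule sets_measure_of) (auto simp del: Collect_mem_eq)

lemma sets_count_meas: "\<eta> \<in> count_meas \<Longrightarrow> sets \<eta> = sets borel"
  unfolding count_meas_def by blast

lemma borel_measurable_count_meas:
  "\<eta> \<in> count_meas \<Longrightarrow> u \<in> borel_measurable borel \<Longrightarrow> u \<in> borel_measurable \<eta>"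
  using measurable_cong_sets[OF sets_count_meas refl] by blast

lemma emeasure_count_meas_finite:
  assumes "\<eta> \<in> count_meas" "B \<in> sets borel" "bounded B"
  shows "emeasure \<eta> B < \<infinity>"
proof -
  obtain n :: nat where "emeasure \<eta> B = of_nat n"
    using assms unfolding count_meas_def by blast
  then show ?thesis by (simp add: of_nat_less_top)
qed

lemma sets_borel_eq_sigma_bounded:
  "sets (borel :: 'a::metric_space measure) = sigma_sets UNIV {A \<in> sets borel. bounded A}"
proof
  show "sigma_sets UNIV {A \<in> sets borel. bounded A} \<subseteq> sets (borel :: 'a measure)"
    using sets.sigma_sets_subset[of "{A \<in> sets borel. bounded A}" borel] by auto
  show "sets (borel :: 'a measure) \<subseteq> sigma_sets UNIV {A \<in> sets borel. bounded A}"
  proof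
    fix A :: "'a set" and x0 :: 'a
    assume A: "A \<in> sets borel"
    have "A = (\<Union>n::nat. A \<inter> ball x0 (real n))"
      by (auto simp: reals_Archimedean2)
    also have "\<dots> \<in> sigma_sets UNIV {A \<in> sets borel. bounded A}"
      using A by (intro sigma_sets.Union sigma_sets.Basic) auto
    finally show "A \<in> sigma_sets UNIV {A \<in> sets borel. bounded A}" .
  qed
qed

lemma measurable_emeasure_bounded_Nspace:
  assumes "B \<in> sets borel" "bounded B"
  shows "(\<lambda>\<eta>. emeasure \<eta> B) \<in> borel_measurable Nspace"
proof (rule measurableI)
  fix A :: "ennreal set"
  assume "A \<in> sets borel"
  then have "{\<eta>\<in>count_meas. emeasure \<eta> B \<in> A} \<in> sets Nspace"
    unfolding sets_Nspace using assms by (intro sigma_sets.Basic) blast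
  then show "(\<lambda>\<eta>. emeasure \<eta> B) -` A \<inter> space Nspace \<in> sets Nspace"
    by (simp add: space_Nspace Int_def conj_commute)
qed simp

text \<open>Intersecting with the bounded set B keeps all counting measures finite, as the complement
  step of the Dynkin argument requires.\<close>

lemma measurable_emeasure_Int_bounded_Nspace:
  fixes B :: "'a::polish_space set"
  assumes C: "C \<in> sets borel" and B: "B \<in> sets borel" "bounded B"
  shows "(\<lambda>\<eta>. emeasure \<eta> (C \<inter> B)) \<in> borel_measurable Nspace"
proof -
  have sets_eta: "sets \<eta> = sets borel" if "\<eta> \<in> space Nspace" for \<eta> :: "'a measure"
    using that sets_count_meas by (simp add: space_Nspace)
  have "Int_stable {A \<in> sets (borel :: 'a measure). bounded A}"
    "{A \<in> sets (borel :: 'a measure). bounded A} \<subseteq> Pow UNIV"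
    "C \<in> sigma_sets UNIV {A \<in> sets borel. bounded A}"
    using C sets_borel_eq_sigma_bounded by (auto simp: Int_stable_def intro: bounded_Int)
  then show ?thesis
  proof (induction rule: sigma_sets_induct_disjoint)
    case (basic A)
    then show ?case using B by (intro measurable_emeasure_bounded_Nspace) auto
  next
    case (compl A)
    then have "A \<in> sets borel" using sets_borel_eq_sigma_bounded by blast
    have "emeasure \<eta> ((UNIV - A) \<inter> B) = emeasure \<eta> B - emeasure \<eta> (A \<inter> B)"
      if "\<eta> \<in> space Nspace" for \<eta>
    proof -
      have "emeasure \<eta> (A \<inter> B) \<noteq> \<infinity>"
        using that \<open>A \<in> sets borel\<close> B bounded_Int[of B A] emeasure_count_meas_finite[of \<eta> "A \<inter> B"]
        by (auto simp: space_Nspace Int_commute)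
      moreover have "(UNIV - A) \<inter> B = B - A \<inter> B" by auto
      ultimately show ?thesis using \<open>A \<in> sets borel\<close> B sets_eta[OF that] by (simp add: emeasure_Diff)
    qed
    moreover have "(\<lambda>\<eta>. emeasure \<eta> B - emeasure \<eta> (A \<inter> B)) \<in> borel_measurable Nspace"
      using compl.IH measurable_emeasure_bounded_Nspace[OF B] by measurable
    ultimately show ?case by (subst measurable_cong) auto
  next
    case (union A)
    then have "A i \<in> sets borel" for i using sets_borel_eq_sigma_bounded by blast
    have "emeasure \<eta> ((\<Union>i. A i) \<inter> B) = (\<Sum>i. emeasure \<eta> (A i \<inter> B))" if "\<eta> \<in> space Nspace" for \<eta>
    proof -
      have "range (\<lambda>i. A i \<inter> B) \<subseteq> sets \<eta>"
        using \<open>\<And>i. A i \<in> sets borel\<close> B sets_eta[OF that] by auto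
      moreover have "disjoint_family (\<lambda>i. A i \<inter> B)"
        using union.hyps(1) by (auto simp: disjoint_family_on_def)
      ultimately have "(\<Sum>i. emeasure \<eta> (A i \<inter> B)) = emeasure \<eta> (\<Union>i. A i \<inter> B)"
        by (rule suminf_emeasure)
      also have "(\<Union>i. A i \<inter> B) = (\<Union>i. A i) \<inter> B" by auto
      finally show ?thesis by simp
    qed
    moreover have "(\<lambda>\<eta>. \<Sum>i. emeasure \<eta> (A i \<inter> B)) \<in> borel_measurable Nspace"
      using union.IH by measurable
    ultimately show ?case by (subst measurable_cong) auto
  qed simp
qed

lemma measurable_emeasure_Nspace:
  fixes A :: "'a::polish_space set"
  assumes A: "A \<in> sets borel"
  shows "(\<lambda>\<eta>. emeasure \<eta> A) \<in> borel_measurable Nspace"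
proof -
  fix x0 :: 'a
  have "emeasure \<eta> A = (SUP n. emeasure \<eta> (A \<inter> ball x0 (real n)))" if "\<eta> \<in> space Nspace" for \<eta>
  proof -
    have "range (\<lambda>n. A \<inter> ball x0 (real n)) \<subseteq> sets \<eta>"
      using A that by (auto simp: space_Nspace sets_count_meas)
    moreover have "incseq (\<lambda>n. A \<inter> ball x0 (real n))"
      by (auto simp: incseq_def)
    ultimately have "(SUP n. emeasure \<eta> (A \<inter> ball x0 (real n))) = emeasure \<eta> (\<Union>n. A \<inter> ball x0 (real n))"
      by (rule SUP_emeasure_incseq)
    also have "(\<Union>n. A \<inter> ball x0 (real n)) = A" by (auto simp: reals_Archimedean2)
    finally show ?thesis by simp
  qed
  moreover have "(\<lambda>\<eta>. SUP n. emeasure \<eta> (A \<inter> ball x0 (real n))) \<in> borel_measurable Nspace"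
    using A by (intro borel_measurable_SUP measurable_emeasure_Int_bounded_Nspace) auto
  ultimately show ?thesis by (subst measurable_cong) auto
qed

lemma measurable_nn_integral_Nspace:
  fixes g :: "'a::polish_space \<Rightarrow> ennreal"
  assumes "g \<in> borel_measurable borel"
  shows "(\<lambda>\<eta>. \<integral>\<^sup>+ x. g x \<partial>\<eta>) \<in> borel_measurable Nspace"
  using assms
proof (induction rule: borel_measurable_induct)
  case (cong f g)
  then show ?case by (simp add: fun_eq_iff)
next
  case (set A)
  then show ?case
    by (subst measurable_cong[where g="\<lambda>\<eta>. emeasure \<eta> A"])
       (auto simp: space_Nspace sets_count_meas intro: measurable_emeasure_Nspace)
next
  case (mult u c)
  then show ?case
    by (subst measurable_cong[where g="\<lambda>\<eta>. c * (\<integral>\<^sup>+ x. u x \<partial>\<eta>)"])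
       (auto simp: space_Nspace borel_measurable_count_meas nn_integral_cmult)
next
  case (add u v)
  then show ?case
    by (subst measurable_cong[where g="\<lambda>\<eta>. (\<integral>\<^sup>+ x. v x \<partial>\<eta>) + (\<integral>\<^sup>+ x. u x \<partial>\<eta>)"])
       (auto simp: space_Nspace borel_measurable_count_meas nn_integral_add)
next
  case (seq U)
  have "(\<lambda>\<eta>. SUP i. \<integral>\<^sup>+ x. U i x \<partial>\<eta>) \<in> borel_measurable Nspace"
    using seq.IH by measurable
  then show ?case
  proof (rule measurable_cong[THEN iffD2, rotated])
    fix \<eta> :: "'a measure"
    assume "\<eta> \<in> space Nspace"
    then show "(\<integral>\<^sup>+ x. (SUP i. U i) x \<partial>\<eta>) = (SUP i. \<integral>\<^sup>+ x. U i x \<partial>\<eta>)"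
      unfolding SUP_apply using seq.hyps
      by (intro nn_integral_monotone_convergence_SUP) (auto simp: space_Nspace borel_measurable_count_meas)
  qed
qed

section \<open>Adding a point\<close>

lemma sets_add_point: "sets (add_point \<eta> x) = sets borel"
  unfolding add_point_def by (simp add: sets.sigma_sets_eq[of borel, simplified])

lemma emeasure_add_point:
  assumes "\<eta> \<in> count_meas" "A \<in> sets borel"
  shows "emeasure (add_point \<eta> x) A = emeasure \<eta> A + indicator A x"
  unfolding add_point_def
proof (rule emeasure_measure_of_sigma)
  show "sigma_algebra UNIV (sets borel)"
    using sets.sigma_algebra_axioms[of borel] by simp
  show "countably_additive (sets borel) (\<lambda>A. emeasure \<eta> A + indicator A x)"
  proof (rule countably_additiveI)
    fix F :: "nat \<Rightarrow> 'a set"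
    assume F: "range F \<subseteq> sets borel" "disjoint_family F"
    then have "(\<Sum>i. emeasure \<eta> (F i)) = emeasure \<eta> (\<Union>i. F i)"
      using sets_count_meas[OF assms(1)] by (intro suminf_emeasure) auto
    moreover have "(\<Sum>i. indicator (F i) x :: ennreal) = indicator (\<Union>i. F i) x"
      using F by (intro suminf_indicator) auto
    ultimately show "(\<Sum>i. emeasure \<eta> (F i) + indicator (F i) x) =
        emeasure \<eta> (\<Union>i. F i) + indicator (\<Union>i. F i) x"
      by (simp add: suminf_add[OF summableI summableI, symmetric])
  qed
qed (use assms in \<open>auto simp: positive_def\<close>)

lemma add_point_in_count_meas:
  assumes "\<eta> \<in> count_meas"
  shows "add_point \<eta> x \<in> count_meas"
  unfolding count_meas_def
proof (intro CollectI conjI ballI impI sets_add_point)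
  fix B :: "'a set"
  assume B: "B \<in> sets borel" "bounded B"
  then obtain n :: nat where "emeasure \<eta> B = of_nat n"
    using assms unfolding count_meas_def by blast
  then have "emeasure (add_point \<eta> x) B = of_nat (n + (if x \<in> B then 1 else 0))"
    using emeasure_add_point[OF assms B(1)] by simp
  then show "\<exists>n::nat. emeasure (add_point \<eta> x) B = of_nat n" ..
qed

lemma measurable_add_point:
  fixes x :: "'a::polish_space"
  shows "(\<lambda>\<eta>. add_point \<eta> x) \<in> Nspace \<rightarrow>\<^sub>M Nspace"
proof (rule measurable_sigma_sets[OF sets_Nspace])
  show "(\<lambda>\<eta>. add_point \<eta> x) \<in> space Nspace \<rightarrow> count_meas"
    by (auto simp: space_Nspace add_point_in_count_meas)
next
  fix G :: "'a measure set"
  assume "G \<in> {{\<eta>\<in>count_meas. emeasure \<eta> B \<in> A} | B A.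
    B \<in> sets borel \<and> bounded B \<and> A \<in> sets (borel :: ennreal measure)}"
  then obtain B :: "'a set" and A where G: "G = {\<eta>\<in>count_meas. emeasure \<eta> B \<in> A}"
    and B: "B \<in> sets borel" "bounded B" and A: "A \<in> sets (borel :: ennreal measure)"
    by blast
  have "(\<lambda>\<eta>. emeasure \<eta> B + indicator B x) \<in> borel_measurable Nspace"
    using measurable_emeasure_bounded_Nspace[OF B] by measurable
  then have "(\<lambda>\<eta>. emeasure \<eta> B + indicator B x) -` A \<inter> space Nspace \<in> sets Nspace"
    using A by (rule measurable_sets)
  moreover have "(\<lambda>\<eta>. add_point \<eta> x) -` G \<inter> space Nspace =
      (\<lambda>\<eta>. emeasure \<eta> B + indicator B x) -` A \<inter> space Nspace"
    using B by (auto simp: G space_Nspace add_point_in_count_meas emeasure_add_point)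
  ultimately show "(\<lambda>\<eta>. add_point \<eta> x) -` G \<inter> space Nspace \<in> sets Nspace" by simp
qed (auto simp: space_Nspace)

lemma nn_integral_add_point:
  fixes g :: "'a::polish_space \<Rightarrow> ennreal"
  assumes \<eta>: "\<eta> \<in> count_meas" and "g \<in> borel_measurable borel"
  shows "(\<integral>\<^sup>+ y. g y \<partial>add_point \<eta> x) = (\<integral>\<^sup>+ y. g y \<partial>\<eta>) + g x"
  using assms(2)
proof (induction rule: borel_measurable_induct)
  case (cong f g)
  then show ?case by (simp add: fun_eq_iff)
next
  case (set A)
  then show ?case
    using emeasure_add_point[OF \<eta> set] sets_count_meas[OF \<eta>] sets_add_point[of \<eta> x] by simp
next
  case (mult u c)
  then show ?case
    by (simp add: borel_measurable_count_meas[OF add_point_in_count_meas[OF \<eta>]]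
        borel_measurable_count_meas[OF \<eta>] nn_integral_cmult distrib_left)
next
  case (add u v)
  then show ?case
    by (simp add: borel_measurable_count_meas[OF add_point_in_count_meas[OF \<eta>]]
        borel_measurable_count_meas[OF \<eta>] nn_integral_add ac_simps)
next
  case (seq U)
  have meas: "U i \<in> borel_measurable (add_point \<eta> x)" "U i \<in> borel_measurable \<eta>" for i
    using seq.hyps borel_measurable_count_meas[OF add_point_in_count_meas[OF \<eta>]]
      borel_measurable_count_meas[OF \<eta>] by blast+
  have incseq: "incseq (\<lambda>i. \<integral>\<^sup>+ y. U i y \<partial>\<eta>)" "incseq (\<lambda>i. U i x)"
    using seq.hyps by (auto simp: incseq_def le_fun_def intro!: nn_integral_mono)
  have "(\<integral>\<^sup>+ y. (SUP i. U i) y \<partial>add_point \<eta> x) = (SUP i. \<integral>\<^sup>+ y. U i y \<partial>add_point \<eta> x)"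
    unfolding SUP_apply using meas seq.hyps by (intro nn_integral_monotone_convergence_SUP) auto
  also have "\<dots> = (SUP i. (\<integral>\<^sup>+ y. U i y \<partial>\<eta>) + U i x)"
    using seq.IH by simp
  also have "\<dots> = (SUP i. \<integral>\<^sup>+ y. U i y \<partial>\<eta>) + (SUP i. U i x)"
    using incseq by (rule ennreal_SUP_add)
  also have "(SUP i. \<integral>\<^sup>+ y. U i y \<partial>\<eta>) = (\<integral>\<^sup>+ y. (SUP i. U i) y \<partial>\<eta>)"
    unfolding SUP_apply using meas seq.hyps by (intro nn_integral_monotone_convergence_SUP[symmetric]) auto
  finally show ?case by (simp only: SUP_apply)
qed

lemma exp_neg_le_1: "exp_neg t \<le> 1"
  unfolding exp_neg_def by (auto simp: enn2real_nonneg)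

lemma exp_neg_pos: "t \<noteq> \<infinity> \<Longrightarrow> 0 < exp_neg t"
  unfolding exp_neg_def by auto

lemma exp_neg_add_ennreal:
  assumes "0 \<le> r"
  shows "exp_neg (t + ennreal r) = exp_neg t * ennreal (exp (- r))"
proof (cases t)
  case (real s)
  then have "t + ennreal r = ennreal (s + r)" using assms by (simp add: ennreal_plus)
  then show ?thesis using real assms
    by (simp add: exp_neg_def exp_add[symmetric] ennreal_mult[symmetric] del: ennreal_plus)
qed (simp add: exp_neg_def)

lemma borel_measurable_exp_neg[measurable]: "exp_neg \<in> borel_measurable borel"
  unfolding exp_neg_def by measurable

lemma exp_neg_nn_integral_add_point:
  assumes "\<eta> \<in> count_meas" "h \<in> borel_measurable borel" "\<And>x. 0 \<le> h x"
  shows "exp_neg (\<integral>\<^sup>+ y. ennreal (h y) \<partial>add_point \<eta> x) =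
    exp_neg (\<integral>\<^sup>+ y. ennreal (h y) \<partial>\<eta>) * ennreal (exp (- h x))"
  using assms by (simp add: nn_integral_add_point exp_neg_add_ennreal)

lemma (in prob_space) nn_integral_exp_neg_neq_0:
  assumes "t \<in> borel_measurable M" "AE x in M. t x \<noteq> \<infinity>"
  shows "(\<integral>\<^sup>+ x. exp_neg (t x) \<partial>M) \<noteq> 0"
proof
  assume "(\<integral>\<^sup>+ x. exp_neg (t x) \<partial>M) = 0"
  then have "AE x in M. exp_neg (t x) = 0"
    using assms(1) by (subst (asm) nn_integral_0_iff_AE) auto
  with assms(2) have "AE x in M. False"
    by eventually_elim (use exp_neg_pos in fastforce)
  then show False by (simp add: AE_False)
qed

section \<open>Gibbs measures\<close>

lemma GibbsD:
  assumes "Gibbs v lam z P"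
  shows "prob_space P" "sets P = sets Nspace"
    and "(\<lambda>(x, \<eta>). F x \<eta>) \<in> borel_measurable (borel \<Otimes>\<^sub>M Nspace) \<Longrightarrow>
      (\<integral>\<^sup>+ \<eta>. (\<integral>\<^sup>+ x. F x \<eta> \<partial>\<eta>) \<partial>P) =
      (\<integral>\<^sup>+ x. (\<integral>\<^sup>+ \<eta>. F x (add_point \<eta> x) * exp_neg (Wpot v x \<eta>) \<partial>P) * ennreal (z x) \<partial>lam)"
  using assms unfolding Gibbs_def by blast+

lemma space_Gibbs: "Gibbs v lam z P \<Longrightarrow> space P = count_meas"
  using sets_eq_imp_space_eq[OF GibbsD(2)] by (simp add: space_Nspace)

lemma measurable_Gibbs: "Gibbs v lam z P \<Longrightarrow> P \<rightarrow>\<^sub>M N = Nspace \<rightarrow>\<^sub>M N"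
  by (rule measurable_cong_sets[OF GibbsD(2) refl])

lemma Gibbs_nn_integral_le:
  fixes f :: "'a::polish_space \<Rightarrow> ennreal"
  assumes P: "Gibbs v lam z P" and f: "f \<in> borel_measurable borel"
  shows "(\<integral>\<^sup>+ \<eta>. (\<integral>\<^sup>+ x. f x \<partial>\<eta>) \<partial>P) \<le> (\<integral>\<^sup>+ x. f x * ennreal (z x) \<partial>lam)"
proof -
  interpret prob_space P using GibbsD(1)[OF P] .
  have "(\<integral>\<^sup>+ \<eta>. (\<integral>\<^sup>+ x. f x \<partial>\<eta>) \<partial>P) =
      (\<integral>\<^sup>+ x. (\<integral>\<^sup>+ \<eta>. f x * exp_neg (Wpot v x \<eta>) \<partial>P) * ennreal (z x) \<partial>lam)"
    using GibbsD(3)[OF P, of "\<lambda>x \<eta>. f x"] f by (simp add: split_beta')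
  also have "\<dots> \<le> (\<integral>\<^sup>+ x. (\<integral>\<^sup>+ \<eta>. f x \<partial>P) * ennreal (z x) \<partial>lam)"
    using exp_neg_le_1
    by (intro nn_integral_mono mult_right_mono) (auto intro: mult_left_le)
  finally show ?thesis by (simp add: emeasure_space_1)
qed

lemma Gibbs_AE_nn_integral_finite:
  fixes f :: "'a::polish_space \<Rightarrow> ennreal"
  assumes P: "Gibbs v lam z P" and f: "f \<in> borel_measurable borel"
    and "(\<integral>\<^sup>+ x. f x * ennreal (z x) \<partial>lam) < \<infinity>"
  shows "AE \<eta> in P. (\<integral>\<^sup>+ x. f x \<partial>\<eta>) \<noteq> \<infinity>"
proof (rule nn_integral_PInf_AE)
  show "(\<lambda>\<eta>. \<integral>\<^sup>+ x. f x \<partial>\<eta>) \<in> borel_measurable P"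
    using measurable_nn_integral_Nspace[OF f] by (simp add: measurable_Gibbs[OF P])
  show "(\<integral>\<^sup>+ \<eta>. (\<integral>\<^sup>+ x. f x \<partial>\<eta>) \<partial>P) \<noteq> \<infinity>"
    using Gibbs_nn_integral_le[OF P f] assms(3) by (simp add: le_less_trans)
qed

lemma measurable_GNZ_integrand:
  assumes F: "(\<lambda>(x, \<eta>). F x \<eta>) \<in> borel_measurable (borel \<Otimes>\<^sub>M Nspace)"
    and v: "v x \<in> borel_measurable borel"
  shows "(\<lambda>\<eta>. F x (add_point \<eta> x) * exp_neg (Wpot v x \<eta>)) \<in> borel_measurable Nspace"
proof -
  have "(\<lambda>\<eta>. F x (add_point \<eta> x)) \<in> borel_measurable Nspace"
    using measurable_compose[OF measurable_Pair[OF measurable_const measurable_add_point] F] by simp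
  moreover have "Wpot v x \<in> borel_measurable Nspace"
    unfolding Wpot_def[abs_def] using v by (rule measurable_nn_integral_Nspace)
  ultimately show ?thesis by measurable
qed

lemma nn_integral_density_count_meas:
  assumes P: "sets P = sets Nspace" and d: "d \<in> borel_measurable P" "\<And>\<eta>. d \<eta> < \<infinity>"
    and F: "(\<lambda>(x, \<eta>). F x \<eta>) \<in> borel_measurable (borel \<Otimes>\<^sub>M Nspace)"
  shows "(\<integral>\<^sup>+ \<eta>. (\<integral>\<^sup>+ x. F x \<eta> \<partial>\<eta>) \<partial>density P d) = (\<integral>\<^sup>+ \<eta>. (\<integral>\<^sup>+ x. F x \<eta> * d \<eta> \<partial>\<eta>) \<partial>P)"
proof -
  have "(\<lambda>x. F x \<eta>) \<in> borel_measurable \<eta>" if "\<eta> \<in> space P" for \<eta>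
    using measurable_compose[OF measurable_Pair2'[of \<eta> Nspace borel] F] that
    by (simp add: sets_eq_imp_space_eq[OF P] space_Nspace borel_measurable_count_meas)
  then show ?thesis
    using d by (simp add: nn_integral_density_nonmeasurable)
      (intro nn_integral_cong, simp add: nn_integral_multc mult.commute[of "d _"])
qed

lemma Gibbs_density_multiplicative:
  fixes g :: "'a::polish_space \<Rightarrow> real"
  assumes P: "Gibbs v lam z P"
    and v: "\<And>x. v x \<in> borel_measurable borel"
    and g: "\<And>x. 0 \<le> g x"
    and d_meas: "d \<in> borel_measurable Nspace" and d_finite: "\<And>\<eta>. d \<eta> < \<infinity>"
    and d_normalized: "(\<integral>\<^sup>+ \<eta>. d \<eta> \<partial>P) = 1"
    and d_add_point: "\<And>\<eta> x. \<eta> \<in> count_meas \<Longrightarrow> d (add_point \<eta> x) = d \<eta> * ennreal (g x)"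
  shows "Gibbs v lam (\<lambda>x. z x * g x) (density P d)"
  unfolding Gibbs_def
proof (intro conjI allI impI)
  have d_meas_P: "d \<in> borel_measurable P"
    using d_meas by (simp add: measurable_Gibbs[OF P])
  show "prob_space (density P d)"
    using d_normalized d_meas_P by (intro prob_spaceI) (simp add: emeasure_density nn_integral_density[symmetric])
  show "sets (density P d) = sets Nspace"
    using GibbsD(2)[OF P] by simp
  fix F :: "'a \<Rightarrow> 'a measure \<Rightarrow> ennreal"
  assume F: "(\<lambda>(x, \<eta>). F x \<eta>) \<in> borel_measurable (borel \<Otimes>\<^sub>M Nspace)"
  then have Fd: "(\<lambda>(x, \<eta>). F x \<eta> * d \<eta>) \<in> borel_measurable (borel \<Otimes>\<^sub>M Nspace)"
    using d_meas by (simp add: split_beta') measurable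
  have shifted: "(\<integral>\<^sup>+ \<eta>. F x (add_point \<eta> x) * d (add_point \<eta> x) * exp_neg (Wpot v x \<eta>) \<partial>P) =
      ennreal (g x) * (\<integral>\<^sup>+ \<eta>. F x (add_point \<eta> x) * exp_neg (Wpot v x \<eta>) \<partial>density P d)" for x
  proof -
    have "(\<lambda>\<eta>. d \<eta> * (F x (add_point \<eta> x) * exp_neg (Wpot v x \<eta>))) \<in> borel_measurable P"
      using measurable_GNZ_integrand[OF F v] d_meas by (simp add: measurable_Gibbs[OF P])
    then have "(\<integral>\<^sup>+ \<eta>. ennreal (g x) * (d \<eta> * (F x (add_point \<eta> x) * exp_neg (Wpot v x \<eta>))) \<partial>P) =
        ennreal (g x) * (\<integral>\<^sup>+ \<eta>. F x (add_point \<eta> x) * exp_neg (Wpot v x \<eta>) \<partial>density P d)"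
      using d_meas_P d_finite by (simp add: nn_integral_cmult nn_integral_density_nonmeasurable)
    then show ?thesis
      by (simp add: space_Gibbs[OF P] d_add_point ac_simps cong: nn_integral_cong_simp)
  qed
  have "(\<integral>\<^sup>+ \<eta>. (\<integral>\<^sup>+ x. F x \<eta> \<partial>\<eta>) \<partial>density P d) = (\<integral>\<^sup>+ \<eta>. (\<integral>\<^sup>+ x. F x \<eta> * d \<eta> \<partial>\<eta>) \<partial>P)"
    using GibbsD(2)[OF P] d_meas_P d_finite F by (rule nn_integral_density_count_meas)
  also have "\<dots> = (\<integral>\<^sup>+ x. (\<integral>\<^sup>+ \<eta>. F x (add_point \<eta> x) * d (add_point \<eta> x) * exp_neg (Wpot v x \<eta>) \<partial>P)
      * ennreal (z x) \<partial>lam)"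
    using GibbsD(3)[OF P Fd] by simp
  also have "\<dots> = (\<integral>\<^sup>+ x. (\<integral>\<^sup>+ \<eta>. F x (add_point \<eta> x) * exp_neg (Wpot v x \<eta>) \<partial>density P d)
      * ennreal (z x * g x) \<partial>lam)"
    by (simp only: shifted) (simp add: ennreal_mult'[OF g] ennreal_mult''[OF g] ac_simps)
  finally show "(\<integral>\<^sup>+ \<eta>. (\<integral>\<^sup>+ x. F x \<eta> \<partial>\<eta>) \<partial>density P d) =
      (\<integral>\<^sup>+ x. (\<integral>\<^sup>+ \<eta>. F x (add_point \<eta> x) * exp_neg (Wpot v x \<eta>) \<partial>density P d) * ennreal (z x * g x) \<partial>lam)" .
qed

theorem mainTheorem16:
  fixes lam :: "'a::polish_space measure"
    and v :: "'a \<Rightarrow> 'a \<Rightarrow> ennreal"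
    and z h :: "'a \<Rightarrow> real"
    and P :: "'a measure measure"
  assumes lam_sets: "sets lam = sets borel"
    and lam_fin: "\<And>B. B \<in> sets borel \<Longrightarrow> bounded B \<Longrightarrow> emeasure lam B < \<infinity>"
    and v_meas: "(\<lambda>(x, y). v x y) \<in> borel_measurable (borel \<Otimes>\<^sub>M borel)"
    and v_sym: "\<And>x y. v x y = v y x"
    and z_meas: "z \<in> borel_measurable borel"
    and z_nonneg: "\<And>x. z x \<ge> 0"
    and z_loc: "\<And>B. B \<in> sets borel \<Longrightarrow> bounded B \<Longrightarrow> (\<integral>\<^sup>+ x\<in>B. ennreal (z x) \<partial>lam) < \<infinity>"
    and P_Gibbs: "Gibbs v lam z P"
    and h_meas: "h \<in> borel_measurable borel"
    and h_nonneg: "\<And>x. h x \<ge> 0"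
    and h_int: "(\<integral>\<^sup>+ x. ennreal (h x) * ennreal (z x) \<partial>lam) < \<infinity>"
  shows "Gibbs v lam (\<lambda>x. z x * exp (- h x))
           (density P (\<lambda>\<eta>. exp_neg (\<integral>\<^sup>+ x. ennreal (h x) \<partial>\<eta>) /
              (\<integral>\<^sup>+ \<gamma>. exp_neg (\<integral>\<^sup>+ x. ennreal (h x) \<partial>\<gamma>) \<partial>P)))"
proof -
  interpret P: prob_space P using GibbsD(1)[OF P_Gibbs] .
  define H where "H \<eta> = (\<integral>\<^sup>+ x. ennreal (h x) \<partial>\<eta>)" for \<eta> :: "'a measure"
  define c where "c = (\<integral>\<^sup>+ \<gamma>. exp_neg (H \<gamma>) \<partial>P)"
  have H_meas: "H \<in> borel_measurable Nspace"
    unfolding H_def[abs_def] using h_meas by (intro measurable_nn_integral_Nspace) measurable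
  have "AE \<eta> in P. H \<eta> \<noteq> \<infinity>"
    unfolding H_def using h_meas h_int by (intro Gibbs_AE_nn_integral_finite[OF P_Gibbs]) auto
  then have "c \<noteq> 0"
    unfolding c_def using H_meas by (intro P.nn_integral_exp_neg_neq_0) (simp add: measurable_Gibbs[OF P_Gibbs])
  have "c < \<infinity>"
    using P.emeasure_space_1 nn_integral_mono[of P "\<lambda>\<gamma>. exp_neg (H \<gamma>)" "\<lambda>_. 1"] exp_neg_le_1
    by (simp add: c_def le_less_trans)
  have "Gibbs v lam (\<lambda>x. z x * exp (- h x)) (density P (\<lambda>\<eta>. exp_neg (H \<eta>) / c))"
  proof (rule Gibbs_density_multiplicative[OF P_Gibbs])
    show "v x \<in> borel_measurable borel" for x
      using measurable_compose[OF measurable_Pair1' v_meas, of x] by simp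
    show "(\<lambda>\<eta>. exp_neg (H \<eta>) / c) \<in> borel_measurable Nspace"
      using H_meas unfolding divide_ennreal_def by measurable
    show "exp_neg (H \<eta>) / c < \<infinity>" for \<eta>
      using \<open>c \<noteq> 0\<close> le_less_trans[OF exp_neg_le_1 ennreal_one_less_top]
      by (simp add: less_top[symmetric] ennreal_divide_eq_top_iff)
    show "(\<integral>\<^sup>+ \<eta>. exp_neg (H \<eta>) / c \<partial>P) = 1"
      using \<open>c \<noteq> 0\<close> \<open>c < \<infinity>\<close> H_meas
      by (simp add: measurable_Gibbs[OF P_Gibbs] nn_integral_divide c_def[symmetric])
    show "exp_neg (H (add_point \<eta> x)) / c = exp_neg (H \<eta>) / c * ennreal (exp (- h x))"
      if "\<eta> \<in> count_meas" for \<eta> x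
      using that h_meas h_nonneg by (simp add: H_def exp_neg_nn_integral_add_point divide_ennreal_def ac_simps)
  qed simp
  then show ?thesis by (simp add: H_def c_def)
qed

end
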